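(* There exists an absolute constant $C_1$ such that the following holds. Let $K\ge1$, let $d\ge2$ be an integer, and let $R_1,R_2$ be $K$-squares which are both contained in a square $R_3\subset[0,1]^2$ of side length $K^{-1/2^d}$ but are not both contained in any square of side length $K^{-1/2^{d-1}}$. Then the set $\mathrm{Reach}_{lin}(R_1,R_2,R_3)$ intersects at most $C_1K$ of the squares in $\{2R:R\in\mathcal{C}_K\}$.
   Context: A $K$-square is a square in $[0,1]^2$ of side length $1/K$; $\mathcal{C}_K$ is the collection of dyadic $K$-squares; for $R\in\mathcal{C}_K$, $2R$ is the square with the same center as $R$ and twice the side length. For squares $R_1,R_2,R_3\subset[0,1]^2$, $\mathrm{Reach}_{lin}(R_1,R_2,R_3)$ is the set of $(x,y)\in R_3$ such that either $(x,y),(x_1,y_1),(x_2,y_2)$ are collinear for some $(x_1,y_1)\in R_1$, $(x_2,y_2)\in R_2$, or $y=y_1$ for some $(x_1,y_1)\in R_1$. *)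

theory Defs
  imports "HOL-Analysis.Analysis"
begin

definition sq :: "real \<Rightarrow> real \<Rightarrow> real \<Rightarrow> (real \<times> real) set" where
  "sq a b s = {(x, y). a \<le> x \<and> x \<le> a + s \<and> b \<le> y \<and> y \<le> b + s}"

definition is_square :: "(real \<times> real) set \<Rightarrow> real \<Rightarrow> bool" where
  "is_square S s \<longleftrightarrow> (\<exists>a b. S = sq a b s)"

definition unit_sq :: "(real \<times> real) set" where
  "unit_sq = sq 0 0 1"

definition K_square :: "real \<Rightarrow> (real \<times> real) set \<Rightarrow> bool" where
  "K_square K R \<longleftrightarrow> is_square R (1 / K) \<and> R \<subseteq> unit_sq"

definition dyadic_squares :: "real \<Rightarrow> (real \<times> real) set set" where
  "dyadic_squares K = {sq (of_int i / K) (of_int j / K) (1 / K) | i j :: int.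
      0 \<le> i \<and> 0 \<le> j \<and> of_int i + 1 \<le> K \<and> of_int j + 1 \<le> K}"

definition dbl :: "(real \<times> real) set \<Rightarrow> (real \<times> real) set" where
  "dbl R = \<Union>{sq (a - s / 2) (b - s / 2) (2 * s) | a b s. s > 0 \<and> R = sq a b s}"

definition Reach_lin :: "(real \<times> real) set \<Rightarrow> (real \<times> real) set \<Rightarrow> (real \<times> real) set
    \<Rightarrow> (real \<times> real) set" where
  "Reach_lin R1 R2 R3 = {p \<in> R3.
      (\<exists>p1\<in>R1. \<exists>p2\<in>R2. collinear {p, p1, p2}) \<or> (\<exists>p1\<in>R1. snd p = snd p1)}"

end

theory Submission
  imports Defs
begin

text \<open>
  Measure lengths in units of \<open>1/K\<close>, so that dyadic \<open>K\<close>-squares become unit lattice cells, and let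
  \<open>s = K^(-1/2^d)\<close> be the side of \<open>R3\<close>, so that \<open>s^2 = K^(-1/2^(d-1))\<close>. As \<open>R1\<close> and \<open>R2\<close> do
  not fit into a common square of side \<open>s^2\<close>, their corners are more than \<open>s^2 - 1/K\<close> apart in one
  coordinate, say the first one. A point \<open>p\<close> of \<open>R3\<close> on the line through \<open>p1 \<in> R1\<close> and \<open>p2 \<in> R2\<close>
  is \<open>p1 + u (p2 - p1)\<close> with \<open>|u| \<le> 2/s\<close>, hence it lies within \<open>O(1/(sK))\<close> of the line through the
  lower left corners of \<open>R1\<close> and \<open>R2\<close>. Such a strip of length \<open>s\<close> meets \<open>O(sK \<cdot> 1/s) = O(K)\<close>
  doubled cells, and the horizontal part of \<open>Reach_lin\<close>, a strip of length \<open>s\<close> and height \<open>1/K\<close>,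
  meets \<open>O(sK)\<close> of them. For \<open>K < 16\<close> the trivial bound \<open>K^2\<close> suffices.
\<close>

lemma int_ball_eq_interval:
  "{i::int. \<bar>of_int i - c\<bar> \<le> r} = {\<lceil>c - r\<rceil>..\<lfloor>c + r\<rfloor>}"
  by (auto simp: abs_le_iff ceiling_le_iff le_floor_iff)

lemma card_int_ball_le:
  fixes c r :: real
  assumes "0 \<le> r"
  shows "real (card {i::int. \<bar>of_int i - c\<bar> \<le> r}) \<le> 2 * r + 1"
proof (cases "\<lceil>c - r\<rceil> \<le> \<lfloor>c + r\<rfloor> + 1")
  case True
  have "real (card {i::int. \<bar>of_int i - c\<bar> \<le> r}) = of_int (\<lfloor>c + r\<rfloor> - \<lceil>c - r\<rceil> + 1)"
    using True by (simp add: int_ball_eq_interval)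
  also have "\<dots> \<le> (c + r) - (c - r) + 1"
    using of_int_floor_le[of "c + r"] le_of_int_ceiling[of "c - r"] by simp linarith
  finally show ?thesis by simp
next
  case False
  then show ?thesis using assms by (simp add: int_ball_eq_interval)
qed

lemma card_int_pairs_le:
  fixes S :: "(int \<times> int) set" and f :: "int \<Rightarrow> real"
  assumes "0 \<le> A" "0 \<le> B"
    and near: "\<And>i j. (i, j) \<in> S \<Longrightarrow> \<bar>of_int i - u\<bar> \<le> A \<and> \<bar>of_int j - f i\<bar> \<le> B"
  shows "real (card S) \<le> (2 * A + 1) * (2 * B + 1)"
proof -
  define I where "I = {i::int. \<bar>of_int i - u\<bar> \<le> A}"
  define J where "J = (\<lambda>i. {j::int. \<bar>of_int j - f i\<bar> \<le> B})"
  have fin: "finite I" "\<And>i. finite (J i)"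
    by (simp_all add: I_def J_def int_ball_eq_interval)
  have "S \<subseteq> Sigma I J" using near by (auto simp: I_def J_def)
  then have "card S \<le> card (Sigma I J)" using fin by (intro card_mono) auto
  also have "\<dots> = (\<Sum>i\<in>I. card (J i))" using fin by simp
  finally have "real (card S) \<le> (\<Sum>i\<in>I. real (card (J i)))"
    by (metis of_nat_le_iff of_nat_sum)
  also have "\<dots> \<le> real (card I) * (2 * B + 1)"
    using card_int_ball_le[OF \<open>0 \<le> B\<close>] by (intro sum_bounded_above) (simp add: J_def)
  also have "\<dots> \<le> (2 * A + 1) * (2 * B + 1)"
    using card_int_ball_le[OF \<open>0 \<le> A\<close>] \<open>0 \<le> B\<close> by (intro mult_right_mono) (simp_all add: I_def)
  finally show ?thesis .
qed

lemma sq_eq_sq_iff: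
  assumes "0 < s" "0 < s'"
  shows "sq a b s = sq a' b' s' \<longleftrightarrow> a = a' \<and> b = b' \<and> s = s'"
proof
  assume eq: "sq a b s = sq a' b' s'"
  have "(a, b) \<in> sq a b s" "(a + s, b + s) \<in> sq a b s"
    "(a', b') \<in> sq a' b' s'" "(a' + s', b' + s') \<in> sq a' b' s'"
    using assms by (simp_all add: sq_def)
  then have "(a, b) \<in> sq a' b' s'" "(a + s, b + s) \<in> sq a' b' s'"
    "(a', b') \<in> sq a b s" "(a' + s', b' + s') \<in> sq a b s"
    by (simp_all add: eq)
  then show "a = a' \<and> b = b' \<and> s = s'" by (auto simp: sq_def)
qed simp

lemma dbl_sq: "0 < s \<Longrightarrow> dbl (sq a b s) = sq (a - s / 2) (b - s / 2) (2 * s)"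
  unfolding dbl_def by (auto simp: sq_eq_sq_iff)

text \<open>
  Index pairs of the dyadic cells \<open>[i/K, (i+1)/K] \<times> [j/K, (j+1)/K]\<close> whose doubled cell meets \<open>X\<close>,
  written in coordinates scaled by \<open>K\<close>.
\<close>
definition near_cells :: "real \<Rightarrow> (real \<times> real) set \<Rightarrow> (int \<times> int) set" where
  "near_cells K X = {(i, j). 0 \<le> i \<and> 0 \<le> j \<and> of_int i + 1 \<le> K \<and> of_int j + 1 \<le> K \<and>
     (\<exists>x y. (x, y) \<in> X \<and> \<bar>x * K - (of_int i + 1/2)\<bar> \<le> 1 \<and> \<bar>y * K - (of_int j + 1/2)\<bar> \<le> 1)}"

lemma finite_near_cells: "finite (near_cells K X)"
proof (rule finite_subset)
  show "near_cells K X \<subseteq> {0..\<lfloor>K\<rfloor>} \<times> {0..\<lfloor>K\<rfloor>}"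
    by (auto simp: near_cells_def le_floor_iff)
qed simp

lemma near_cells_Un: "near_cells K (X \<union> Y) = near_cells K X \<union> near_cells K Y"
  by (auto simp: near_cells_def)

lemma near_cells_swap: "near_cells K (prod.swap ` X) = prod.swap ` near_cells K X"
proof -
  have "(i, j) \<in> near_cells K (prod.swap ` X) \<longleftrightarrow> (j, i) \<in> near_cells K X" for i j
    by (auto simp: near_cells_def)
  then show ?thesis by (simp add: set_eq_iff split_paired_All)
qed

lemma card_dbl_dyadic_meeting_le:
  assumes "0 < K"
  shows "card {Q \<in> dbl ` dyadic_squares K. Q \<inter> X \<noteq> {}} \<le> card (near_cells K X)"
proof -
  define cell where "cell = (\<lambda>(i::int, j::int). dbl (sq (of_int i / K) (of_int j / K) (1 / K)))"
  have "{Q \<in> dbl ` dyadic_squares K. Q \<inter> X \<noteq> {}} \<subseteq> cell ` near_cells K X"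
  proof
    fix Q assume "Q \<in> {Q \<in> dbl ` dyadic_squares K. Q \<inter> X \<noteq> {}}"
    then obtain i j x y where ij: "0 \<le> i" "0 \<le> j" "of_int i + 1 \<le> K" "of_int j + 1 \<le> K"
      and Q: "Q = cell (i, j)" and xy: "(x, y) \<in> Q" "(x, y) \<in> X"
      by (auto simp: dyadic_squares_def cell_def)
    have "(x, y) \<in> sq (of_int i / K - 1 / K / 2) (of_int j / K - 1 / K / 2) (2 * (1 / K))"
      using xy(1) assms by (simp add: Q cell_def dbl_sq)
    then have "of_int i - 1/2 \<le> x * K" "x * K \<le> of_int i + 3/2"
      "of_int j - 1/2 \<le> y * K" "y * K \<le> of_int j + 3/2"
      using assms by (auto simp: sq_def field_simps)
    then have "\<bar>x * K - (of_int i + 1/2)\<bar> \<le> 1" "\<bar>y * K - (of_int j + 1/2)\<bar> \<le> 1"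
      using assms by (simp_all add: abs_le_iff field_simps)
    with ij xy(2) have "(i, j) \<in> near_cells K X" by (auto simp: near_cells_def)
    with Q show "Q \<in> cell ` near_cells K X" by blast
  qed
  then have "card {Q \<in> dbl ` dyadic_squares K. Q \<inter> X \<noteq> {}} \<le> card (cell ` near_cells K X)"
    by (intro card_mono) (simp_all add: finite_near_cells)
  also have "\<dots> \<le> card (near_cells K X)" by (rule card_image_le[OF finite_near_cells])
  finally show ?thesis .
qed

lemma card_near_cells_le_square:
  assumes "1 \<le> K"
  shows "real (card (near_cells K X)) \<le> K * K"
proof -
  have "real (card (near_cells K X)) \<le> (2 * ((K - 1) / 2) + 1) * (2 * ((K - 1) / 2) + 1)"
  proof (rule card_int_pairs_le[where u = "(K - 1) / 2" and f = "\<lambda>_. (K - 1) / 2"])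
    fix i j assume "(i, j) \<in> near_cells K X"
    then have "0 \<le> real_of_int i" "of_int i + 1 \<le> K" "0 \<le> real_of_int j" "of_int j + 1 \<le> K"
      by (auto simp: near_cells_def)
    then show "\<bar>of_int i - (K - 1) / 2\<bar> \<le> (K - 1) / 2 \<and> \<bar>of_int j - (K - 1) / 2\<bar> \<le> (K - 1) / 2"
      unfolding abs_le_iff by argo
  qed (use assms in simp_all)
  moreover have "2 * ((K - 1) / 2) + 1 = K" by (simp add: field_simps)
  ultimately show ?thesis by (simp only:)
qed

lemma card_near_cells_strip:
  assumes "0 < K" "0 \<le> s" "\<bar>m\<bar> \<le> 1" "0 \<le> w"
    and strip: "\<And>x y. (x, y) \<in> X \<Longrightarrow> a \<le> x \<and> x \<le> a + s \<and> \<bar>y - (m * x + c)\<bar> \<le> w"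
  shows "real (card (near_cells K X)) \<le> (s * K + 3) * (2 * K * w + 5)"
proof -
  have "real (card (near_cells K X)) \<le> (2 * (1 + s * K / 2) + 1) * (2 * (2 + K * w) + 1)"
  proof (rule card_int_pairs_le[where u = "(a + s / 2) * K - 1/2"
        and f = "\<lambda>i. m * (of_int i + 1/2) + c * K - 1/2"])
    fix i j assume "(i, j) \<in> near_cells K X"
    then obtain x y where xy: "(x, y) \<in> X"
      and ci: "\<bar>x * K - (of_int i + 1/2)\<bar> \<le> 1" and cj: "\<bar>y * K - (of_int j + 1/2)\<bar> \<le> 1"
      by (auto simp: near_cells_def)
    from strip[OF xy] have "a \<le> x" "x \<le> a + s" and y: "\<bar>y - (m * x + c)\<bar> \<le> w"
      by auto
    then have x: "a * K \<le> x * K" "x * K \<le> a * K + s * K"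
      using mult_right_mono[OF \<open>x \<le> a + s\<close>, of K] \<open>0 < K\<close> by (simp_all add: distrib_right)
    have "y * K - (m * (x * K) + c * K) = K * (y - (m * x + c))" by (simp add: algebra_simps)
    then have "\<bar>y * K - (m * (x * K) + c * K)\<bar> = K * \<bar>y - (m * x + c)\<bar>"
      using \<open>0 < K\<close> by (simp add: abs_mult)
    also have "\<dots> \<le> K * w" using y \<open>0 < K\<close> by simp
    finally have "\<bar>y * K - (m * (x * K) + c * K)\<bar> \<le> K * w" .
    moreover have "\<bar>m * (x * K) - m * (of_int i + 1/2)\<bar> \<le> 1 * 1"
      unfolding right_diff_distrib[symmetric] abs_mult
      by (rule mult_mono) (use \<open>\<bar>m\<bar> \<le> 1\<close> ci in auto)
    ultimately have "\<bar>of_int j - (m * (of_int i + 1/2) + c * K - 1/2)\<bar> \<le> 2 + K * w"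
      using cj unfolding abs_le_iff by (intro conjI; linarith)
    moreover have "\<bar>of_int i - ((a + s / 2) * K - 1/2)\<bar> \<le> 1 + s * K / 2"
      using ci x unfolding abs_le_iff distrib_right by (intro conjI; linarith)
    ultimately show "\<bar>of_int i - ((a + s / 2) * K - 1/2)\<bar> \<le> 1 + s * K / 2 \<and>
        \<bar>of_int j - (m * (of_int i + 1/2) + c * K - 1/2)\<bar> \<le> 2 + K * w" by blast
  qed (use assms in simp_all)
  also have "\<dots> = (s * K + 3) * (2 * K * w + 5)" by (simp add: algebra_simps)
  finally show ?thesis .
qed

lemma card_near_cells_strip_swap:
  assumes "0 < K" "0 \<le> s" "\<bar>m\<bar> \<le> 1" "0 \<le> w"
    and strip: "\<And>x y. (x, y) \<in> X \<Longrightarrow> b \<le> y \<and> y \<le> b + s \<and> \<bar>x - (m * y + c)\<bar> \<le> w"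
  shows "real (card (near_cells K X)) \<le> (s * K + 3) * (2 * K * w + 5)"
proof -
  have "real (card (near_cells K (prod.swap ` X))) \<le> (s * K + 3) * (2 * K * w + 5)"
  proof (rule card_near_cells_strip[OF assms(1-4)])
    fix x y assume "(x, y) \<in> prod.swap ` X"
    then have "(y, x) \<in> X" by (metis pair_in_swap_image swap_simp)
    then show "b \<le> x \<and> x \<le> b + s \<and> \<bar>y - (m * x + c)\<bar> \<le> w" by (rule strip)
  qed
  then show ?thesis by (simp add: near_cells_swap card_image)
qed

lemma collinear_3_coords:
  fixes x y x1 y1 x2 y2 :: real
  assumes "collinear {(x, y), (x1, y1), (x2, y2)}" "(x1, y1) \<noteq> (x2, y2)"
  obtains u where "x = x1 + u * (x2 - x1)" "y = y1 + u * (y2 - y1)"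
proof -
  have "collinear {(x2, y2), (x, y), (x1, y1)}" using assms(1) by (simp add: insert_commute)
  then obtain u where "(x, y) = u *\<^sub>R (x2, y2) + (1 - u) *\<^sub>R (x1, y1)"
    using assms(2) unfolding collinear_3_expand by auto
  then have "x = x1 + u * (x2 - x1)" "y = y1 + u * (y2 - y1)" by (simp_all add: algebra_simps)
  then show thesis by (rule that)
qed

lemma swap_mem_sq: "(x, y) \<in> sq a b s \<Longrightarrow> (y, x) \<in> sq b a s"
  by (simp add: sq_def)

text \<open>
  The line of slope \<open>m\<close> through the corner \<open>(a\<^sub>1, b\<^sub>1)\<close> also passes through \<open>(a\<^sub>2, b\<^sub>2)\<close>, and a point
  \<open>(x, y)\<close> on the line through \<open>(x\<^sub>1, y\<^sub>1)\<close> and \<open>(x\<^sub>2, y\<^sub>2)\<close> deviates from it by at most \<open>h (1 + \<bar>u\<bar>)\<close>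
  in each coordinate. Since \<open>\<bar>x\<^sub>2 - x\<^sub>1\<bar> \<ge> s\<^sup>2/2\<close> while \<open>\<bar>x - x\<^sub>1\<bar> \<le> s\<close>, the parameter satisfies \<open>\<bar>u\<bar> \<le> 2/s\<close>.
\<close>
lemma deviation_from_corner_line:
  fixes a1 b1 a2 b2 a3 b3 s h x y x1 y1 x2 y2 u m :: real
  assumes "0 < h" "0 < s"
    and "(x1, y1) \<in> sq a1 b1 h" "(x2, y2) \<in> sq a2 b2 h"
    and "(x, y) \<in> sq a3 b3 s" "(x1, y1) \<in> sq a3 b3 s"
    and "\<bar>b2 - b1\<bar> \<le> \<bar>a2 - a1\<bar>" and far: "s\<^sup>2 / 2 \<le> \<bar>a2 - a1\<bar> - h"
    and m: "m = (b2 - b1) / (a2 - a1)"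
    and x: "x = x1 + u * (x2 - x1)" and y: "y = y1 + u * (y2 - y1)"
  shows "\<bar>y - (m * x + (b1 - m * a1))\<bar> \<le> 2 * h * (1 + 2 / s)"
proof -
  have box: "a1 \<le> x1" "x1 \<le> a1 + h" "a2 \<le> x2" "x2 \<le> a2 + h"
    "b1 \<le> y1" "y1 \<le> b1 + h" "b2 \<le> y2" "y2 \<le> b2 + h"
    "a3 \<le> x" "x \<le> a3 + s" "a3 \<le> x1" "x1 \<le> a3 + s"
    using assms(3-6) by (simp_all add: sq_def)
  have "0 < s\<^sup>2 / 2" using \<open>0 < s\<close> by simp
  have "a2 - a1 \<noteq> 0"
  proof
    assume "a2 - a1 = 0"
    then have "\<bar>a2 - a1\<bar> = 0" by simp
    with far \<open>0 < h\<close> \<open>0 < s\<^sup>2 / 2\<close> show False by linarith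
  qed
  then have slope: "m * (a2 - a1) = b2 - b1" and "\<bar>m\<bar> \<le> 1"
    using \<open>\<bar>b2 - b1\<bar> \<le> \<bar>a2 - a1\<bar>\<close> by (simp_all add: m abs_divide divide_le_eq_1)
  have "\<bar>u\<bar> * (s\<^sup>2 / 2) \<le> \<bar>u\<bar> * \<bar>x2 - x1\<bar>"
    using far box by (intro mult_left_mono) linarith+
  also have "\<dots> = \<bar>x - x1\<bar>" by (simp add: x abs_mult)
  also have "\<dots> \<le> s" using box by linarith
  finally have "(\<bar>u\<bar> * s) * s \<le> 2 * s" by (simp add: power2_eq_square algebra_simps)
  then have "\<bar>u\<bar> \<le> 2 / s" using \<open>0 < s\<close> by (simp add: pos_le_divide_eq)
  define ex ey where "ex = (x1 - a1) + u * ((x2 - a2) - (x1 - a1))"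
    and "ey = (y1 - b1) + u * ((y2 - b2) - (y1 - b1))"
  have "y - (m * x + (b1 - m * a1)) = ey - m * ex + u * ((b2 - b1) - m * (a2 - a1))"
    by (simp add: ex_def ey_def x y algebra_simps)
  then have dev: "y - (m * x + (b1 - m * a1)) = ey - m * ex" by (simp add: slope)
  have "\<bar>u * ((x2 - a2) - (x1 - a1))\<bar> \<le> \<bar>u\<bar> * h" "\<bar>u * ((y2 - b2) - (y1 - b1))\<bar> \<le> \<bar>u\<bar> * h"
    unfolding abs_mult using box by (intro mult_left_mono; simp add: abs_le_iff)+
  then have ex: "\<bar>ex\<bar> \<le> h + \<bar>u\<bar> * h" and ey: "\<bar>ey\<bar> \<le> h + \<bar>u\<bar> * h"
    using box unfolding ex_def ey_def by linarith+
  have "\<bar>m * ex\<bar> \<le> \<bar>ex\<bar>"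
    using \<open>\<bar>m\<bar> \<le> 1\<close> by (simp add: abs_mult mult_left_le_one_le)
  have "\<bar>y - (m * x + (b1 - m * a1))\<bar> \<le> \<bar>ey\<bar> + \<bar>m * ex\<bar>"
    unfolding dev by (rule abs_triangle_ineq4)
  also have "\<dots> \<le> (h + \<bar>u\<bar> * h) + (h + \<bar>u\<bar> * h)"
    using ex ey \<open>\<bar>m * ex\<bar> \<le> \<bar>ex\<bar>\<close> by linarith
  also have "\<dots> = 2 * h * (1 + \<bar>u\<bar>)" by (simp add: algebra_simps)
  also have "\<dots> \<le> 2 * h * (1 + 2 / s)"
    using \<open>\<bar>u\<bar> \<le> 2 / s\<close> \<open>0 < h\<close> by (intro mult_left_mono) auto
  finally show ?thesis .
qed

lemma card_near_cells_collinear_part: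
  assumes K: "0 < K" and h: "h = 1 / K" and "0 < s" and small: "4 * h \<le> s\<^sup>2"
    and R1: "sq a1 b1 h \<subseteq> sq a3 b3 s"
    and sep: "s\<^sup>2 - h < \<bar>a2 - a1\<bar> \<or> s\<^sup>2 - h < \<bar>b2 - b1\<bar>"
  shows "real (card (near_cells K
      {p \<in> sq a3 b3 s. \<exists>p1\<in>sq a1 b1 h. \<exists>p2\<in>sq a2 b2 h. collinear {p, p1, p2}}))
    \<le> (s * K + 3) * (9 + 8 / s)"
proof -
  define Cs where "Cs = {p \<in> sq a3 b3 s. \<exists>p1\<in>sq a1 b1 h. \<exists>p2\<in>sq a2 b2 h. collinear {p, p1, p2}}"
  define w where "w = 2 * h * (1 + 2 / s)"
  have "0 < h" using K h by simp
  have "0 \<le> w" using \<open>0 < h\<close> \<open>0 < s\<close> by (simp add: w_def)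
  have width: "2 * K * w + 5 = 9 + 8 / s" using K by (simp add: w_def h field_simps)
  have on_line: "\<exists>x1 y1 x2 y2 u. (x1, y1) \<in> sq a1 b1 h \<and> (x2, y2) \<in> sq a2 b2 h \<and>
      (x, y) \<in> sq a3 b3 s \<and> (x1, y1) \<in> sq a3 b3 s \<and>
      x = x1 + u * (x2 - x1) \<and> y = y1 + u * (y2 - y1)" if xy: "(x, y) \<in> Cs" for x y
  proof -
    obtain p1 p2 where "(x, y) \<in> sq a3 b3 s" "p1 \<in> sq a1 b1 h" "p2 \<in> sq a2 b2 h"
      and "collinear {(x, y), p1, p2}"
      using xy unfolding Cs_def by blast
    moreover obtain x1 y1 where "p1 = (x1, y1)" by (rule prod.exhaust)
    moreover obtain x2 y2 where "p2 = (x2, y2)" by (rule prod.exhaust)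
    ultimately have p: "(x, y) \<in> sq a3 b3 s" "(x1, y1) \<in> sq a1 b1 h" "(x2, y2) \<in> sq a2 b2 h"
      and col: "collinear {(x, y), (x1, y1), (x2, y2)}" by simp_all
    have "(x1, y1) \<noteq> (x2, y2)"
    proof
      assume "(x1, y1) = (x2, y2)"
      with p(2,3) have "\<bar>a2 - a1\<bar> \<le> h" "\<bar>b2 - b1\<bar> \<le> h"
        unfolding sq_def abs_le_iff by auto
      with sep small \<open>0 < h\<close> show False by linarith
    qed
    with col obtain u where "x = x1 + u * (x2 - x1)" "y = y1 + u * (y2 - y1)"
      by (rule collinear_3_coords)
    with p R1 show ?thesis by blast
  qed
  have "real (card (near_cells K Cs)) \<le> (s * K + 3) * (2 * K * w + 5)"
  proof (cases "\<bar>b2 - b1\<bar> \<le> \<bar>a2 - a1\<bar>")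
    case True
    define m where "m = (b2 - b1) / (a2 - a1)"
    have "s\<^sup>2 - h < \<bar>a2 - a1\<bar>" using sep True by auto
    then have far: "s\<^sup>2 / 2 \<le> \<bar>a2 - a1\<bar> - h" using small by linarith
    have "\<bar>m\<bar> \<le> 1"
      using True by (cases "a2 - a1 = 0") (simp_all add: m_def abs_divide divide_le_eq_1)
    show ?thesis
    proof (rule card_near_cells_strip[OF K _ \<open>\<bar>m\<bar> \<le> 1\<close> \<open>0 \<le> w\<close>, where a = a3 and c = "b1 - m * a1"])
      fix x y assume "(x, y) \<in> Cs"
      then obtain x1 y1 x2 y2 u where p1: "(x1, y1) \<in> sq a1 b1 h" and p2: "(x2, y2) \<in> sq a2 b2 h"
        and p: "(x, y) \<in> sq a3 b3 s" and p13: "(x1, y1) \<in> sq a3 b3 s"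
        and x: "x = x1 + u * (x2 - x1)" and y: "y = y1 + u * (y2 - y1)"
        using on_line by blast
      from deviation_from_corner_line[OF \<open>0 < h\<close> \<open>0 < s\<close> p1 p2 p p13 True far m_def x y] p
      show "a3 \<le> x \<and> x \<le> a3 + s \<and> \<bar>y - (m * x + (b1 - m * a1))\<bar> \<le> w"
        by (simp add: sq_def w_def)
    qed (use \<open>0 < s\<close> in simp)
  next
    case False
    define m where "m = (a2 - a1) / (b2 - b1)"
    have "s\<^sup>2 - h < \<bar>b2 - b1\<bar>" using sep False by auto
    then have far: "s\<^sup>2 / 2 \<le> \<bar>b2 - b1\<bar> - h" using small by linarith
    have "\<bar>m\<bar> \<le> 1"
      using False by (cases "b2 - b1 = 0") (simp_all add: m_def abs_divide divide_le_eq_1)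
    show ?thesis
    proof (rule card_near_cells_strip_swap[OF K _ \<open>\<bar>m\<bar> \<le> 1\<close> \<open>0 \<le> w\<close>, where b = b3 and c = "a1 - m * b1"])
      fix x y assume "(x, y) \<in> Cs"
      then obtain x1 y1 x2 y2 u where p1: "(x1, y1) \<in> sq a1 b1 h" and p2: "(x2, y2) \<in> sq a2 b2 h"
        and p: "(x, y) \<in> sq a3 b3 s" and p13: "(x1, y1) \<in> sq a3 b3 s"
        and x: "x = x1 + u * (x2 - x1)" and y: "y = y1 + u * (y2 - y1)"
        using on_line by blast
      from deviation_from_corner_line[OF \<open>0 < h\<close> \<open>0 < s\<close>
          p1[THEN swap_mem_sq] p2[THEN swap_mem_sq] p[THEN swap_mem_sq] p13[THEN swap_mem_sq]
          False[unfolded not_le, THEN less_imp_le] far m_def y x] p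
      show "b3 \<le> y \<and> y \<le> b3 + s \<and> \<bar>x - (m * y + (a1 - m * b1))\<bar> \<le> w"
        by (simp add: sq_def w_def)
    qed (use \<open>0 < s\<close> in simp)
  qed
  then show ?thesis by (simp add: Cs_def width)
qed

lemma card_near_cells_level_part:
  assumes "0 < K" "0 \<le> s"
  shows "real (card (near_cells K {p \<in> sq a3 b3 s. \<exists>p1\<in>sq a1 b1 (1 / K). snd p = snd p1}))
    \<le> 7 * (s * K + 3)"
proof -
  have "real (card (near_cells K {p \<in> sq a3 b3 s. \<exists>p1\<in>sq a1 b1 (1 / K). snd p = snd p1}))
      \<le> (s * K + 3) * (2 * K * (1 / K) + 5)"
    by (rule card_near_cells_strip[where m = 0 and a = a3 and c = b1])
      (use assms in \<open>auto simp: sq_def abs_le_iff\<close>)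
  then show ?thesis using assms by simp
qed

lemma card_near_cells_Reach_lin:
  assumes "1 \<le> K" "1 / K \<le> s" "s \<le> 1" "4 / K \<le> s\<^sup>2"
    and R1: "sq a1 b1 (1 / K) \<subseteq> sq a3 b3 s"
    and sep: "s\<^sup>2 - 1 / K < \<bar>a2 - a1\<bar> \<or> s\<^sup>2 - 1 / K < \<bar>b2 - b1\<bar>"
  shows "real (card (near_cells K (Reach_lin (sq a1 b1 (1 / K)) (sq a2 b2 (1 / K)) (sq a3 b3 s))))
    \<le> 96 * K"
proof -
  let ?Cs = "{p \<in> sq a3 b3 s. \<exists>p1\<in>sq a1 b1 (1 / K). \<exists>p2\<in>sq a2 b2 (1 / K). collinear {p, p1, p2}}"
  let ?Hs = "{p \<in> sq a3 b3 s. \<exists>p1\<in>sq a1 b1 (1 / K). snd p = snd p1}"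
  have "0 < K" using assms(1) by simp
  then have "0 < s" using assms(2) by (smt (verit) divide_pos_pos)
  have "s * K \<le> K" using mult_right_mono[OF \<open>s \<le> 1\<close>, of K] \<open>0 < K\<close> by simp
  have "1 / s \<le> K" using assms(2) \<open>0 < K\<close> \<open>0 < s\<close> by (simp add: field_simps)
  have "4 * (1 / K) \<le> s\<^sup>2" using assms(4) by simp
  have "Reach_lin (sq a1 b1 (1 / K)) (sq a2 b2 (1 / K)) (sq a3 b3 s) = ?Cs \<union> ?Hs"
    by (auto simp: Reach_lin_def)
  then have "card (near_cells K (Reach_lin (sq a1 b1 (1 / K)) (sq a2 b2 (1 / K)) (sq a3 b3 s)))
      \<le> card (near_cells K ?Cs) + card (near_cells K ?Hs)"
    by (simp add: near_cells_Un card_Un_le)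
  then have "real (card (near_cells K (Reach_lin (sq a1 b1 (1 / K)) (sq a2 b2 (1 / K)) (sq a3 b3 s))))
      \<le> real (card (near_cells K ?Cs)) + real (card (near_cells K ?Hs))"
    using of_nat_mono by fastforce
  also have "\<dots> \<le> (s * K + 3) * (9 + 8 / s) + 7 * (s * K + 3)"
    using card_near_cells_collinear_part[OF \<open>0 < K\<close> refl \<open>0 < s\<close> \<open>4 * (1 / K) \<le> s\<^sup>2\<close> R1 sep]
      card_near_cells_level_part[OF \<open>0 < K\<close> less_imp_le[OF \<open>0 < s\<close>]]
    by (rule add_mono)
  also have "\<dots> = 16 * (s * K) + 8 * K + 48 + 24 * (1 / s)"
    using \<open>0 < s\<close> by (simp add: field_simps)
  also have "\<dots> \<le> 96 * K"
    using \<open>s * K \<le> K\<close> \<open>1 / s \<le> K\<close> assms(1) by linarith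
  finally show ?thesis .
qed

lemma separated_if_not_in_common_square:
  assumes "\<not> (\<exists>S. is_square S t \<and> sq a1 b1 h \<subseteq> S \<and> sq a2 b2 h \<subseteq> S)"
  shows "t - h < \<bar>a2 - a1\<bar> \<or> t - h < \<bar>b2 - b1\<bar>"
proof (rule ccontr)
  assume "\<not> ?thesis"
  then have "sq a1 b1 h \<subseteq> sq (min a1 a2) (min b1 b2) t" "sq a2 b2 h \<subseteq> sq (min a1 a2) (min b1 b2) t"
    by (auto simp: sq_def min_def abs_le_iff)
  with assms show False by (auto simp: is_square_def)
qed

lemma powr_neg_bounds:
  fixes K e :: real
  assumes "1 \<le> K" "0 \<le> e" "e \<le> 1"
  shows "1 / K \<le> K powr - e" "K powr - e \<le> 1"
proof -
  have "K powr - 1 \<le> K powr - e" using assms by (intro powr_mono) simp_all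
  then show "1 / K \<le> K powr - e" using assms by (simp add: powr_minus_divide)
  show "K powr - e \<le> 1" using assms powr_mono[of "- e" 0 K] by simp
qed

lemma four_div_le_powr_neg:
  fixes K e :: real
  assumes "16 \<le> K" "e \<le> 1 / 2"
  shows "4 / K \<le> K powr - e"
proof -
  have "4 \<le> sqrt K" using real_sqrt_le_mono[OF assms(1)] by simp
  then have "4 * sqrt K \<le> sqrt K * sqrt K" by (rule mult_right_mono) (use assms(1) in simp)
  then have "4 * sqrt K \<le> K" using assms(1) by simp
  then have "4 / K \<le> 1 / sqrt K" using assms(1) by (simp add: field_simps)
  also have "\<dots> = K powr - (1 / 2)" using assms(1) by (simp add: powr_minus_divide powr_half_sqrt)
  also have "\<dots> \<le> K powr - e" using assms by (intro powr_mono) simp_all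
  finally show ?thesis .
qed

lemma powr_neg_inverse_pow2_squared:
  fixes K :: real
  assumes "0 < K" "1 \<le> d"
  shows "(K powr - (1 / 2 ^ d))\<^sup>2 = K powr - (1 / 2 ^ (d - 1))"
proof -
  have "(2::real) ^ d = 2 * 2 ^ (d - 1)" using assms(2) by (simp flip: power_Suc)
  then show ?thesis using assms(1) by (simp add: powr_power)
qed

theorem lemma6p2:
  shows "\<exists>C1::real. \<forall>(K::real) (d::nat) R1 R2 R3.
    K \<ge> 1 \<longrightarrow> d \<ge> 2 \<longrightarrow> K_square K R1 \<longrightarrow> K_square K R2 \<longrightarrow>
    is_square R3 (K powr (- (1 / 2 ^ d))) \<longrightarrow> R3 \<subseteq> unit_sq \<longrightarrow>
    R1 \<subseteq> R3 \<longrightarrow> R2 \<subseteq> R3 \<longrightarrow>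
    \<not> (\<exists>S. is_square S (K powr (- (1 / 2 ^ (d - 1)))) \<and> R1 \<subseteq> S \<and> R2 \<subseteq> S) \<longrightarrow>
    real (card {Q \<in> dbl ` dyadic_squares K. Q \<inter> Reach_lin R1 R2 R3 \<noteq> {}}) \<le> C1 * K"
proof (intro exI[of _ 96] allI impI)
  fix K :: real and d :: nat and R1 R2 R3 :: "(real \<times> real) set"
  assume K: "1 \<le> K" and d: "2 \<le> d" and "K_square K R1" "K_square K R2"
    and "is_square R3 (K powr - (1 / 2 ^ d))" "R3 \<subseteq> unit_sq" and "R1 \<subseteq> R3" "R2 \<subseteq> R3"
    and apart: "\<not> (\<exists>S. is_square S (K powr - (1 / 2 ^ (d - 1))) \<and> R1 \<subseteq> S \<and> R2 \<subseteq> S)"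
  define s where "s = K powr - (1 / 2 ^ d)"
  obtain a1 b1 a2 b2 a3 b3 where R: "R1 = sq a1 b1 (1 / K)" "R2 = sq a2 b2 (1 / K)" "R3 = sq a3 b3 s"
    using \<open>K_square K R1\<close> \<open>K_square K R2\<close> \<open>is_square R3 _\<close>
    by (auto simp: K_square_def is_square_def s_def)
  have "real (card {Q \<in> dbl ` dyadic_squares K. Q \<inter> Reach_lin R1 R2 R3 \<noteq> {}})
      \<le> real (card (near_cells K (Reach_lin R1 R2 R3)))"
    using K by (simp add: card_dbl_dyadic_meeting_le)
  also have "\<dots> \<le> 96 * K"
  proof (cases "K < 16")
    case True
    with K have "K * K \<le> 16 * K" by (intro mult_right_mono) simp_all
    then show ?thesis using card_near_cells_le_square[OF K, of "Reach_lin R1 R2 R3"] K by linarith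
  next
    case False
    have s2: "s\<^sup>2 = K powr - (1 / 2 ^ (d - 1))"
      using K d by (simp add: s_def powr_neg_inverse_pow2_squared)
    have "(1::real) / 2 ^ (d - 1) \<le> 1 / 2" using d by (simp add: field_simps self_le_power)
    then have "4 / K \<le> s\<^sup>2" unfolding s2 using False by (intro four_div_le_powr_neg) simp_all
    moreover have "1 / K \<le> s" "s \<le> 1" using powr_neg_bounds[OF K, of "1 / 2 ^ d"] by (simp_all add: s_def)
    moreover have "s\<^sup>2 - 1 / K < \<bar>a2 - a1\<bar> \<or> s\<^sup>2 - 1 / K < \<bar>b2 - b1\<bar>"
      using apart by (intro separated_if_not_in_common_square) (simp add: R s2)
    ultimately show ?thesis using card_near_cells_Reach_lin[OF K] \<open>R1 \<subseteq> R3\<close> by (simp add: R)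
  qed
  finally show "real (card {Q \<in> dbl ` dyadic_squares K. Q \<inter> Reach_lin R1 R2 R3 \<noteq> {}}) \<le> 96 * K" .
qed

end
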